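(* Let $\mathbf{J}=(J_{ij})\in\mathbb{R}^{n\times n}$ be a real symmetric matrix with zero diagonal, let $\alpha>0$, and let $\beta$ satisfy $$\beta\ \ge\ \|\mathbf{J}+\alpha\mathbf{I}\|_\infty=\max_{1\le i\le n}\Big(\alpha+\sum_{j\ne i}|J_{ij}|\Big).$$ Let $\boldsymbol{x}^{(0)}\in\mathbb{R}^n$ be arbitrary and define $\boldsymbol{x}^{(k+1)}=\mathcal{T}(\boldsymbol{x}^{(k)})$ for $k\ge0$, where $\mathcal{T}(\boldsymbol{x})=\varphi(\beta^{-1}(\mathbf{J}+\alpha\mathbf{I})\boldsymbol{x})$ and $\varphi(z_1,\dots,z_n)=(\sqrt[3]{z_1},\dots,\sqrt[3]{z_n})$ (real cube roots). Then the sequence $\{\boldsymbol{x}^{(k)}\}$ is bounded. *)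

theory Defs
  imports "HOL-Analysis.Analysis"
begin

text \<open>Componentwise real cube root (Isabelle's root 3 is the odd, sign-preserving real cube root).\<close>
definition cbrt_vec :: "real ^ 'n \<Rightarrow> real ^ 'n" where
  "cbrt_vec z = (\<chi> i. root 3 (z $ i))"

definition T_map :: "real ^ 'n ^ 'n \<Rightarrow> real \<Rightarrow> real \<Rightarrow> real ^ 'n \<Rightarrow> real ^ 'n" where
  "T_map J \<alpha> \<beta> x = cbrt_vec ((inverse \<beta>) *\<^sub>R ((J + \<alpha> *\<^sub>R mat 1) *v x))"

end

theory Submission
  imports Defs
begin

text \<open>For M \<ge> 1 the max-norm ball of radius M is invariant under T_map: the hypothesis on \<beta>
  says that every row of (J + \<alpha> I) / \<beta> has absolute sum at most 1, so the linear part maps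
  the ball into itself, and the cube root maps [-M, M] into itself. Hence every orbit stays in
  the ball of radius max 1 (norm x0).\<close>

definition max_norm_cball :: "real \<Rightarrow> (real ^ 'n) set" where
  "max_norm_cball M = {x. \<forall>i. \<bar>x $ i\<bar> \<le> M}"

lemma bounded_max_norm_cball: "bounded (max_norm_cball M :: (real ^ 'n) set)"
proof -
  have "norm x \<le> CARD('n) * M" if "x \<in> max_norm_cball M" for x :: "real ^ 'n"
  proof -
    have "norm x \<le> (\<Sum>i\<in>UNIV. \<bar>x $ i\<bar>)" by (rule norm_le_l1_cart)
    also have "\<dots> \<le> (\<Sum>i\<in>(UNIV::'n set). M)"
      using that by (intro sum_mono) (simp add: max_norm_cball_def)
    finally show ?thesis by simp
  qed
  then show ?thesis unfolding bounded_iff by blast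
qed

lemma mem_max_norm_cball_norm: "x \<in> max_norm_cball (norm x)"
  by (simp add: max_norm_cball_def component_le_norm_cart)

lemma max_norm_cball_mono: "M \<le> N \<Longrightarrow> max_norm_cball M \<subseteq> max_norm_cball N"
  unfolding max_norm_cball_def by (auto intro: order_trans)

lemma funpow_mem_invariant: "f ` S \<subseteq> S \<Longrightarrow> x \<in> S \<Longrightarrow> (f ^^ k) x \<in> S"
  by (induction k) auto

lemma real_root_le_self: "0 < n \<Longrightarrow> 1 \<le> x \<Longrightarrow> root n x \<le> x"
  using self_le_power[of "root n x" n] by simp

lemma abs_real_root_le: "0 < n \<Longrightarrow> 1 \<le> M \<Longrightarrow> \<bar>x\<bar> \<le> M \<Longrightarrow> \<bar>root n x\<bar> \<le> M"
  using real_root_le_self[of n M] real_root_le_mono[of n "\<bar>x\<bar>" M] real_root_abs[of n x]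
  by linarith

lemma abs_matrix_vector_mult_le:
  fixes A :: "real ^ 'n ^ 'm" and x :: "real ^ 'n"
  assumes "(\<Sum>j\<in>UNIV. \<bar>A $ i $ j\<bar>) \<le> c" and "x \<in> max_norm_cball M"
  shows "\<bar>(A *v x) $ i\<bar> \<le> c * M"
proof -
  have x: "\<bar>x $ j\<bar> \<le> M" for j using assms(2) by (simp add: max_norm_cball_def)
  then have "0 \<le> M" by (meson abs_ge_zero order_trans)
  have "\<bar>(A *v x) $ i\<bar> \<le> (\<Sum>j\<in>UNIV. \<bar>A $ i $ j\<bar> * \<bar>x $ j\<bar>)"
    unfolding matrix_vector_mult_def by (simp add: sum_abs[THEN order_trans] abs_mult)
  also have "\<dots> \<le> (\<Sum>j\<in>UNIV. \<bar>A $ i $ j\<bar>) * M"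
    unfolding sum_distrib_right using x by (intro sum_mono mult_left_mono) auto
  also have "\<dots> \<le> c * M" using assms(1) \<open>0 \<le> M\<close> by (rule mult_right_mono)
  finally show ?thesis .
qed

lemma row_abs_sum_add_scaled_id:
  fixes J :: "real ^ 'n ^ 'n"
  assumes "J $ i $ i = 0" and "0 \<le> \<alpha>"
  shows "(\<Sum>j\<in>UNIV. \<bar>(J + \<alpha> *\<^sub>R mat 1) $ i $ j\<bar>) = \<alpha> + (\<Sum>j\<in>UNIV - {i}. \<bar>J $ i $ j\<bar>)"
proof -
  have "(\<Sum>j\<in>UNIV. \<bar>(J + \<alpha> *\<^sub>R mat 1) $ i $ j\<bar>)
      = \<bar>(J + \<alpha> *\<^sub>R mat 1) $ i $ i\<bar> + (\<Sum>j\<in>UNIV - {i}. \<bar>(J + \<alpha> *\<^sub>R mat 1) $ i $ j\<bar>)"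
    by (simp add: sum.remove)
  also have "(\<Sum>j\<in>UNIV - {i}. \<bar>(J + \<alpha> *\<^sub>R mat 1) $ i $ j\<bar>) = (\<Sum>j\<in>UNIV - {i}. \<bar>J $ i $ j\<bar>)"
    by (intro sum.cong) (auto simp: mat_def)
  finally show ?thesis using assms by (simp add: mat_def)
qed

lemma T_map_max_norm_cball:
  fixes J :: "real ^ 'n ^ 'n"
  assumes diag: "\<forall>i. J $ i $ i = 0" and "0 \<le> \<alpha>"
    and row_sum: "\<forall>i. \<alpha> + (\<Sum>j\<in>UNIV - {i}. \<bar>J $ i $ j\<bar>) \<le> \<beta>"
    and "1 \<le> M"
  shows "T_map J \<alpha> \<beta> ` max_norm_cball M \<subseteq> max_norm_cball M"
proof (intro image_subsetI)
  fix x :: "real ^ 'n"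
  assume x: "x \<in> max_norm_cball M"
  have "\<bar>T_map J \<alpha> \<beta> x $ i\<bar> \<le> M" for i
  proof -
    have row_le: "(\<Sum>j\<in>UNIV. \<bar>(J + \<alpha> *\<^sub>R mat 1) $ i $ j\<bar>) \<le> \<beta>"
      using row_sum row_abs_sum_add_scaled_id[of J i \<alpha>] diag \<open>0 \<le> \<alpha>\<close> by simp
    from abs_matrix_vector_mult_le[OF row_le x]
    have Ax: "\<bar>((J + \<alpha> *\<^sub>R mat 1) *v x) $ i\<bar> \<le> \<beta> * M" .
    have "0 \<le> \<beta>" by (rule order_trans[OF sum_nonneg row_le]) simp
    have "\<bar>inverse \<beta> * y\<bar> \<le> M" if "\<bar>y\<bar> \<le> \<beta> * M" for y
      using that \<open>0 \<le> \<beta>\<close> \<open>1 \<le> M\<close> by (cases "\<beta> = 0") (simp_all add: abs_mult field_simps)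
    from this[OF Ax] show ?thesis
      unfolding T_map_def cbrt_vec_def using \<open>1 \<le> M\<close> by (simp add: abs_real_root_le)
  qed
  then show "T_map J \<alpha> \<beta> x \<in> max_norm_cball M" by (simp add: max_norm_cball_def)
qed

theorem propositionS10:
  fixes J :: "real ^ 'n ^ 'n" and \<alpha> \<beta> :: real and x0 :: "real ^ 'n"
  assumes "transpose J = J"
    and "\<forall>i. J $ i $ i = 0"
    and "\<alpha> > 0"
    and "\<forall>i. \<alpha> + (\<Sum>j\<in>UNIV - {i}. \<bar>J $ i $ j\<bar>) \<le> \<beta>"
  shows "bounded (range (\<lambda>k. (T_map J \<alpha> \<beta> ^^ k) x0))"
proof -
  define M where "M = max 1 (norm x0)"
  have "1 \<le> M" by (simp add: M_def)
  have "x0 \<in> max_norm_cball M"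
    using mem_max_norm_cball_norm max_norm_cball_mono[of "norm x0" M] by (auto simp: M_def)
  moreover have "T_map J \<alpha> \<beta> ` max_norm_cball M \<subseteq> max_norm_cball M"
    using assms(3) by (intro T_map_max_norm_cball[OF assms(2) _ assms(4) \<open>1 \<le> M\<close>]) simp
  ultimately have "range (\<lambda>k. (T_map J \<alpha> \<beta> ^^ k) x0) \<subseteq> max_norm_cball M"
    by (auto intro: funpow_mem_invariant)
  then show ?thesis by (rule bounded_subset[OF bounded_max_norm_cball])
qed

end
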